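(* Let $\Delta:A\to A$ be a weak-2-local derivation on a C$^*$-algebra $A$. Suppose $p$ is a projection in $A$ and $b\in A$ satisfies $pb=bp=0$. Then $p\Delta(a+b)p=p\Delta(a)p$ for every $a\in A$. In particular, $p\Delta(a)p=p\Delta(a-(1-p)a(1-p))p$ for every $a\in A$.
   Context: Here $(1-p)a(1-p)=a-pa-ap+pap$ (computed in the unitization if $A$ is non-unital). A derivation on $A$ is a linear map $D:A\to A$ with $D(ab)=D(a)b+aD(b)$. A (not necessarily linear) map $\Delta:A\to A$ is a weak-2-local derivation if for every $a,b\in A$ and every $\phi\in A^*$ there exists a derivation $D_{a,b,\phi}:A\to A$ such that $\phi\Delta(a)=\phi D_{a,b,\phi}(a)$ and $\phi\Delta(b)=\phi D_{a,b,\phi}(b)$. *)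

theory Defs
  imports "HOL-Analysis.Analysis"
begin

text \<open>A (not necessarily unital) complex C*-algebra: a real Banach algebra
 with a compatible complex scalar multiplication and an involution satisfying
 the C*-identity.\<close>

class cstar_algebra = real_normed_algebra + banach +
  fixes scaleC :: "complex \<Rightarrow> 'a \<Rightarrow> 'a"
    and cstar :: "'a \<Rightarrow> 'a"
  assumes scaleC_add_left: "scaleC (c + d) x = scaleC c x + scaleC d x"
    and scaleC_add_right: "scaleC c (x + y) = scaleC c x + scaleC c y"
    and scaleC_scaleC: "scaleC c (scaleC d x) = scaleC (c * d) x"
    and scaleC_one: "scaleC 1 x = x"
    and scaleC_of_real: "scaleC (of_real r) x = scaleR r x"
    and scaleC_mult_left: "scaleC c (x * y) = scaleC c x * y"
    and scaleC_mult_right: "scaleC c (x * y) = x * scaleC c y"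
    and norm_scaleC: "norm (scaleC c x) = cmod c * norm x"
    and cstar_add: "cstar (x + y) = cstar x + cstar y"
    and cstar_scaleC: "cstar (scaleC c x) = scaleC (cnj c) (cstar x)"
    and cstar_mult: "cstar (x * y) = cstar y * cstar x"
    and cstar_cstar: "cstar (cstar x) = x"
    and cstar_identity: "norm (cstar x * x) = (norm x)\<^sup>2"

definition projection :: "'a::cstar_algebra \<Rightarrow> bool" where
  "projection p \<longleftrightarrow> cstar p = p \<and> p * p = p"

definition dual_functional :: "('a::cstar_algebra \<Rightarrow> complex) \<Rightarrow> bool" where
  "dual_functional \<phi> \<longleftrightarrow>
     (\<forall>x y. \<phi> (x + y) = \<phi> x + \<phi> y) \<and>
     (\<forall>c x. \<phi> (scaleC c x) = c * \<phi> x) \<and>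
     (\<exists>K. \<forall>x. cmod (\<phi> x) \<le> K * norm x)"

definition derivation :: "('a::cstar_algebra \<Rightarrow> 'a) \<Rightarrow> bool" where
  "derivation D \<longleftrightarrow>
     (\<forall>x y. D (x + y) = D x + D y) \<and>
     (\<forall>c x. D (scaleC c x) = scaleC c (D x)) \<and>
     (\<forall>a b. D (a * b) = D a * b + a * D b)"

definition weak_2_local_derivation :: "('a::cstar_algebra \<Rightarrow> 'a) \<Rightarrow> bool" where
  "weak_2_local_derivation \<Delta> \<longleftrightarrow>
     (\<forall>a b \<phi>. dual_functional \<phi> \<longrightarrow>
        (\<exists>D. derivation D \<and> \<phi> (\<Delta> a) = \<phi> (D a) \<and> \<phi> (\<Delta> b) = \<phi> (D b)))"

end

theory Submission
  imports Defs
begin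

text \<open>Compress a bounded functional \<open>\<phi>\<close> to \<open>\<psi> y = \<phi> (p y p)\<close>. Weak-2-locality gives a single
  derivation \<open>D\<close> agreeing with \<open>\<Delta>\<close> under \<open>\<psi>\<close> at both \<open>a + b\<close> and \<open>a\<close>, and
  \<open>p D(b) p = - D(p) b p = 0\<close> since \<open>p b = b p = 0\<close>. So no \<open>\<phi>\<close> distinguishes \<open>p \<Delta>(a + b) p\<close> from
  \<open>p \<Delta>(a) p\<close>, and by the Hahn-Banach theorem (Zorn's lemma on norm-dominated partial linear
  functionals, then complexification) bounded functionals separate points. The second claim is
  the first with \<open>b = (1 - p) a (1 - p)\<close>.\<close>

text \<open>Partial real-linear functionals dominated by the norm, represented by their graphs;
  the domain is \<open>fst ` G\<close>.\<close>

definition dominated_linear_graph :: "('a::real_normed_vector \<times> real) set \<Rightarrow> bool" where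
  "dominated_linear_graph G \<longleftrightarrow>
     (\<forall>x u v. (x, u) \<in> G \<longrightarrow> (x, v) \<in> G \<longrightarrow> u = v) \<and>
     (\<forall>x u y v. (x, u) \<in> G \<longrightarrow> (y, v) \<in> G \<longrightarrow> (x + y, u + v) \<in> G) \<and>
     (\<forall>x u c. (x, u) \<in> G \<longrightarrow> (c *\<^sub>R x, c * u) \<in> G) \<and>
     (\<forall>x u. (x, u) \<in> G \<longrightarrow> u \<le> norm x)"

lemma dominated_linear_graphD:
  assumes "dominated_linear_graph G"
  shows "(x, u) \<in> G \<Longrightarrow> (x, v) \<in> G \<Longrightarrow> u = v"
    and "(x, u) \<in> G \<Longrightarrow> (y, v) \<in> G \<Longrightarrow> (x + y, u + v) \<in> G"
    and "(x, u) \<in> G \<Longrightarrow> (c *\<^sub>R x, c * u) \<in> G"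
    and "(x, u) \<in> G \<Longrightarrow> u \<le> norm x"
  using assms unfolding dominated_linear_graph_def by blast+

lemma dominated_extension_constant:
  assumes G: "dominated_linear_graph G" and "G \<noteq> {}"
  obtains c where "\<And>y v. (y, v) \<in> G \<Longrightarrow> v - norm (y - z) \<le> c"
    and "\<And>x u. (x, u) \<in> G \<Longrightarrow> c \<le> norm (x + z) - u"
proof -
  have sep: "v - norm (y - z) \<le> norm (x + z) - u" if "(x, u) \<in> G" "(y, v) \<in> G" for x u y v
  proof -
    have "u + v \<le> norm ((x + z) + (y - z))"
      using dominated_linear_graphD(4)[OF G dominated_linear_graphD(2)[OF G that]] by simp
    also have "\<dots> \<le> norm (x + z) + norm (y - z)" by (rule norm_triangle_ineq)
    finally show ?thesis by simp
  qed
  define S where "S = {v - norm (y - z) | y v. (y, v) \<in> G}"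
  have "S \<noteq> {}" using \<open>G \<noteq> {}\<close> unfolding S_def by auto
  moreover have "bdd_above S"
    using sep \<open>G \<noteq> {}\<close> unfolding S_def bdd_above_def by fast
  ultimately show ?thesis
    by (intro that[of "Sup S"] cSup_upper cSup_least) (auto simp: S_def sep)
qed

lemma dominated_extension_bound:
  assumes G: "dominated_linear_graph G"
    and lower: "\<And>y v. (y, v) \<in> G \<Longrightarrow> v - norm (y - z) \<le> c"
    and upper: "\<And>x u. (x, u) \<in> G \<Longrightarrow> c \<le> norm (x + z) - u"
    and xu: "(x, u) \<in> G"
  shows "u + t * c \<le> norm (x + t *\<^sub>R z)"
proof (cases t "0::real" rule: linorder_cases)
  case less
  define s where "s = - t"
  have s: "s > 0" using less by (simp add: s_def)
  have "(1/s) * u - norm ((1/s) *\<^sub>R x - z) \<le> c"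
    using lower[OF dominated_linear_graphD(3)[OF G xu]] .
  hence "s * ((1/s) * u - norm ((1/s) *\<^sub>R x - z)) \<le> s * c"
    using s by (simp add: mult_left_mono)
  moreover have "s * norm ((1/s) *\<^sub>R x - z) = norm (s *\<^sub>R ((1/s) *\<^sub>R x - z))"
    using s by simp
  moreover have "s *\<^sub>R ((1/s) *\<^sub>R x - z) = x + t *\<^sub>R z"
    using s by (simp add: s_def scaleR_diff_right)
  ultimately have "u - norm (x + t *\<^sub>R z) \<le> s * c"
    using s by (simp add: right_diff_distrib)
  then show ?thesis by (simp add: s_def)
next
  case equal
  then show ?thesis using dominated_linear_graphD(4)[OF G xu] by simp
next
  case greater
  have "c \<le> norm ((1/t) *\<^sub>R x + z) - (1/t) * u"
    using upper[OF dominated_linear_graphD(3)[OF G xu]] .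
  hence "t * c \<le> t * (norm ((1/t) *\<^sub>R x + z) - (1/t) * u)"
    using greater by (simp add: mult_left_mono)
  moreover have "t * norm ((1/t) *\<^sub>R x + z) = norm (t *\<^sub>R ((1/t) *\<^sub>R x + z))"
    using greater by simp
  moreover have "t *\<^sub>R ((1/t) *\<^sub>R x + z) = x + t *\<^sub>R z"
    using greater by (simp add: scaleR_add_right)
  ultimately show ?thesis using greater by (simp add: right_diff_distrib)
qed

lemma dominated_linear_graph_coefficient_unique:
  assumes G: "dominated_linear_graph G" and z: "z \<notin> fst ` G"
    and "(x, u) \<in> G" "(y, v) \<in> G" and eq: "x + t *\<^sub>R z = y + s *\<^sub>R z"
  shows "t = s"
proof (rule ccontr)
  assume "t \<noteq> s"
  have "(x + (-1) *\<^sub>R y, u + (-1) * v) \<in> G"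
    using dominated_linear_graphD(2,3)[OF G] assms(3,4) by blast
  then have "((1/(s - t)) *\<^sub>R (x - y), (1/(s - t)) * (u - v)) \<in> G"
    using dominated_linear_graphD(3)[OF G] by (simp only: scaleR_minus1_left) fastforce
  moreover have "x - y = (s - t) *\<^sub>R z" using eq by (simp add: algebra_simps)
  ultimately have "(z, (1/(s - t)) * (u - v)) \<in> G" using \<open>t \<noteq> s\<close> by simp
  with z show False by force
qed

lemma dominated_linear_graph_extend:
  assumes G: "dominated_linear_graph G" and "G \<noteq> {}" and z: "z \<notin> fst ` G"
  shows "\<exists>G'. dominated_linear_graph G' \<and> G \<subseteq> G' \<and> z \<in> fst ` G'"
proof -
  obtain c where lower: "\<And>y v. (y, v) \<in> G \<Longrightarrow> v - norm (y - z) \<le> c"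
    and upper: "\<And>x u. (x, u) \<in> G \<Longrightarrow> c \<le> norm (x + z) - u"
    using dominated_extension_constant[OF G \<open>G \<noteq> {}\<close>] by blast
  define G' where "G' = {(x + t *\<^sub>R z, u + t * c) | x u t. (x, u) \<in> G}"
  have mem: "(x + t *\<^sub>R z, u + t * c) \<in> G'" if "(x, u) \<in> G" for x u t
    unfolding G'_def using that by blast
  have "dominated_linear_graph G'"
    unfolding dominated_linear_graph_def
  proof (intro conjI allI impI)
    fix w u v assume "(w, u) \<in> G'" "(w, v) \<in> G'"
    then obtain x u1 t y v1 s where x: "w = x + t *\<^sub>R z" "u = u1 + t * c" "(x, u1) \<in> G"
      and y: "w = y + s *\<^sub>R z" "v = v1 + s * c" "(y, v1) \<in> G"
      unfolding G'_def by blast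
    then have "t = s" using dominated_linear_graph_coefficient_unique[OF G z] by blast
    with x y show "u = v" using dominated_linear_graphD(1)[OF G] by simp
  next
    fix w u w' v assume "(w, u) \<in> G'" "(w', v) \<in> G'"
    then obtain x u1 t y v1 s where "w = x + t *\<^sub>R z" "u = u1 + t * c" "(x, u1) \<in> G"
      and "w' = y + s *\<^sub>R z" "v = v1 + s * c" "(y, v1) \<in> G"
      unfolding G'_def by blast
    with mem[OF dominated_linear_graphD(2)[OF G], of x u1 y v1 "t + s"]
    show "(w + w', u + v) \<in> G'" by (simp add: algebra_simps)
  next
    fix w u d assume "(w, u) \<in> G'"
    then obtain x u1 t where "w = x + t *\<^sub>R z" "u = u1 + t * c" "(x, u1) \<in> G"
      unfolding G'_def by blast
    with mem[OF dominated_linear_graphD(3)[OF G], of x u1 d "d * t"]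
    show "(d *\<^sub>R w, d * u) \<in> G'" by (simp add: algebra_simps)
  next
    fix w u assume "(w, u) \<in> G'"
    then show "u \<le> norm w"
      unfolding G'_def using dominated_extension_bound[OF G lower upper] by blast
  qed
  moreover have "G \<subseteq> G'" using mem[of _ _ 0] by force
  moreover have "z \<in> fst ` G'"
    using mem[of 0 0 1] dominated_linear_graphD(3)[OF G, of _ _ 0] \<open>G \<noteq> {}\<close> by force
  ultimately show ?thesis by blast
qed

lemma dominated_linear_graph_chain_Union:
  assumes C: "chain\<^sub>\<subseteq> C" and "\<And>G. G \<in> C \<Longrightarrow> dominated_linear_graph G"
  shows "dominated_linear_graph (\<Union>C)"
proof -
  have common: "\<exists>G\<in>C. q \<in> G \<and> r \<in> G" if "q \<in> \<Union>C" "r \<in> \<Union>C" for q r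
    using that C unfolding chain_subset_def by blast
  show ?thesis
    unfolding dominated_linear_graph_def
  proof (intro conjI allI impI)
    fix x u v assume "(x, u) \<in> \<Union>C" "(x, v) \<in> \<Union>C"
    then obtain G where "G \<in> C" "(x, u) \<in> G" "(x, v) \<in> G" using common by blast
    then show "u = v" using assms(2) dominated_linear_graphD(1) by blast
  next
    fix x u y v assume "(x, u) \<in> \<Union>C" "(y, v) \<in> \<Union>C"
    then show "(x + y, u + v) \<in> \<Union>C" using common assms(2) dominated_linear_graphD(2) by blast
  next
    fix x u c assume "(x, u) \<in> \<Union>C"
    then show "(c *\<^sub>R x, c * u) \<in> \<Union>C" using assms(2) dominated_linear_graphD(3) by blast
  next
    fix x u assume "(x, u) \<in> \<Union>C"
    then show "u \<le> norm x" using assms(2) dominated_linear_graphD(4) by blast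
  qed
qed

lemma dominated_linear_graph_norm_line:
  fixes x0 :: "'a::real_normed_vector"
  shows "dominated_linear_graph {(c *\<^sub>R x0, c * norm x0) | c. True}"
    (is "dominated_linear_graph ?G0")
  unfolding dominated_linear_graph_def
proof (intro conjI allI impI)
  fix x u v assume "(x, u) \<in> ?G0" "(x, v) \<in> ?G0"
  then obtain c d where "x = c *\<^sub>R x0" "u = c * norm x0" "x = d *\<^sub>R x0" "v = d * norm x0"
    by blast
  then show "u = v" by (cases "x0 = 0") auto
next
  fix x u y v assume "(x, u) \<in> ?G0" "(y, v) \<in> ?G0"
  then obtain c d where "x = c *\<^sub>R x0" "u = c * norm x0" "y = d *\<^sub>R x0" "v = d * norm x0"
    by blast
  then show "(x + y, u + v) \<in> ?G0"
    by (intro CollectI exI[of _ "c + d"]) (simp add: scaleR_add_left distrib_right)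
next
  fix x u e assume "(x, u) \<in> ?G0"
  then obtain c where "x = c *\<^sub>R x0" "u = c * norm x0" by blast
  then show "(e *\<^sub>R x, e * u) \<in> ?G0" by (intro CollectI exI[of _ "e * c"]) simp
next
  fix x u assume "(x, u) \<in> ?G0"
  then show "u \<le> norm x" by (auto simp: mult_right_mono)
qed

lemma total_dominated_linear_graph:
  fixes x0 :: "'a::real_normed_vector"
  obtains M where "dominated_linear_graph M" "(x0, norm x0) \<in> M" "fst ` M = UNIV"
proof -
  define A where "A = {G. dominated_linear_graph G \<and> (x0, norm x0) \<in> G}"
  define G0 where "G0 = {(c *\<^sub>R x0, c * norm x0) | c. True}"
  have "dominated_linear_graph G0"
    unfolding G0_def by (rule dominated_linear_graph_norm_line)
  moreover have "(x0, norm x0) \<in> G0" unfolding G0_def by (auto intro: exI[of _ 1])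
  ultimately have "G0 \<in> A" unfolding A_def by blast
  have "\<forall>C\<in>chains A. \<exists>U\<in>A. \<forall>G\<in>C. G \<subseteq> U"
  proof
    fix C assume C: "C \<in> chains A"
    show "\<exists>U\<in>A. \<forall>G\<in>C. G \<subseteq> U"
    proof (cases "C = {}")
      case True
      then show ?thesis using \<open>G0 \<in> A\<close> by blast
    next
      case False
      then have "\<Union>C \<in> A"
        using C dominated_linear_graph_chain_Union[of C] unfolding A_def chains_def by auto
      then show ?thesis by blast
    qed
  qed
  then obtain M where "M \<in> A" and maximal: "\<And>G. G \<in> A \<Longrightarrow> M \<subseteq> G \<Longrightarrow> G = M"
    using Zorn_Lemma2 by force
  have "z \<in> fst ` M" for z
  proof (rule ccontr)
    assume "z \<notin> fst ` M"
    moreover have "M \<noteq> {}" using \<open>M \<in> A\<close> unfolding A_def by blast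
    ultimately obtain G where "dominated_linear_graph G" "M \<subseteq> G" "z \<in> fst ` G"
      using dominated_linear_graph_extend \<open>M \<in> A\<close> unfolding A_def by blast
    with maximal[of G] \<open>M \<in> A\<close> \<open>z \<notin> fst ` M\<close> show False unfolding A_def by blast
  qed
  then show ?thesis using that \<open>M \<in> A\<close> unfolding A_def by blast
qed

lemma real_norming_functional:
  fixes x0 :: "'a::real_normed_vector"
  obtains f :: "'a \<Rightarrow> real" where "linear f" "\<And>x. \<bar>f x\<bar> \<le> norm x" "f x0 = norm x0"
proof -
  obtain M where M: "dominated_linear_graph M" "(x0, norm x0) \<in> M" "fst ` M = UNIV"
    by (rule total_dominated_linear_graph)
  define f where "f x = (THE u. (x, u) \<in> M)" for x
  have graph: "(x, u) \<in> M \<longleftrightarrow> u = f x" for x u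
  proof -
    have "x \<in> fst ` M" using M(3) by simp
    then obtain v where v: "(x, v) \<in> M" by force
    have "f x = v"
      unfolding f_def by (rule the_equality) (use v dominated_linear_graphD(1)[OF M(1)] in auto)
    with v show ?thesis using dominated_linear_graphD(1)[OF M(1)] by blast
  qed
  have "linear f"
    by (rule linearI) (use dominated_linear_graphD(2,3)[OF M(1)] graph in auto)
  have bound: "f x \<le> norm x" for x
    using dominated_linear_graphD(4)[OF M(1)] graph by blast
  have "\<bar>f x\<bar> \<le> norm x" for x
    using bound[of x] bound[of "- x"] by (simp add: linear_neg[OF \<open>linear f\<close>])
  moreover have "f x0 = norm x0" using graph M(2) by simp
  ultimately show ?thesis using \<open>linear f\<close> that by blast
qed

lemma scaleC_Re_Im:
  fixes y :: "'a::cstar_algebra"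
  shows "scaleC c y = Re c *\<^sub>R y + Im c *\<^sub>R scaleC \<i> y"
proof -
  have "c = of_real (Re c) + of_real (Im c) * \<i>"
    by (simp add: complex_eq_iff)
  then have "scaleC c y = scaleC (of_real (Re c) + of_real (Im c) * \<i>) y"
    by (rule arg_cong[where f = "\<lambda>c. scaleC c y"])
  also have "\<dots> = Re c *\<^sub>R y + Im c *\<^sub>R scaleC \<i> y"
    by (simp add: scaleC_add_left scaleC_of_real flip: scaleC_scaleC)
  finally show ?thesis .
qed

lemma dual_functional_nonzero:
  fixes x :: "'a::cstar_algebra"
  assumes "x \<noteq> 0"
  obtains \<phi> where "dual_functional \<phi>" "\<phi> x \<noteq> 0"
proof -
  obtain f :: "'a \<Rightarrow> real" where f: "linear f" "\<And>y. \<bar>f y\<bar> \<le> norm y" "f x = norm x"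
    using real_norming_functional[of x] by metis
  define \<phi> where "\<phi> y = of_real (f y) - \<i> * of_real (f (scaleC \<i> y))" for y
  have f_scaleC: "f (scaleC c y) = Re c * f y + Im c * f (scaleC \<i> y)" for c y
    by (subst scaleC_Re_Im) (simp add: linear_add[OF f(1)] linear_scale[OF f(1)])
  have "dual_functional \<phi>"
    unfolding dual_functional_def
  proof (intro conjI allI)
    fix y z show "\<phi> (y + z) = \<phi> y + \<phi> z"
      unfolding \<phi>_def by (simp add: scaleC_add_right linear_add[OF f(1)] algebra_simps)
  next
    fix c y
    have "f (scaleC \<i> (scaleC c y)) = f (scaleC (\<i> * c) y)"
      by (simp add: scaleC_scaleC)
    also have "\<dots> = - Im c * f y + Re c * f (scaleC \<i> y)"
      by (subst f_scaleC) simp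
    finally have "f (scaleC \<i> (scaleC c y)) = - Im c * f y + Re c * f (scaleC \<i> y)" .
    then show "\<phi> (scaleC c y) = c * \<phi> y"
      unfolding \<phi>_def by (subst (1) f_scaleC) (simp add: complex_eq_iff algebra_simps)
  next
    have "cmod (\<phi> y) \<le> 2 * norm y" for y
    proof -
      have "cmod (\<phi> y) \<le> \<bar>f y\<bar> + \<bar>f (scaleC \<i> y)\<bar>"
        unfolding \<phi>_def using norm_triangle_ineq4 by (metis abs_mult norm_ii mult_1 norm_mult norm_of_real)
      also have "\<dots> \<le> norm y + norm (scaleC \<i> y)" using f(2) by (intro add_mono)
      finally show ?thesis by (simp add: norm_scaleC)
    qed
    then show "\<exists>K. \<forall>y. cmod (\<phi> y) \<le> K * norm y" by blast
  qed
  moreover have "Re (\<phi> x) \<noteq> 0" unfolding \<phi>_def using f(3) assms by simp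
  ultimately show ?thesis using that by force
qed

lemma dual_functional_diff:
  assumes "dual_functional \<phi>"
  shows "\<phi> (x - y) = \<phi> x - \<phi> y"
  using assms unfolding dual_functional_def by (metis add_diff_cancel_left' diff_add_cancel)

lemma dual_functional_eqI:
  fixes x y :: "'a::cstar_algebra"
  assumes "\<And>\<phi>. dual_functional \<phi> \<Longrightarrow> \<phi> x = \<phi> y"
  shows "x = y"
proof (rule ccontr)
  assume "x \<noteq> y"
  then obtain \<phi> where "dual_functional \<phi>" "\<phi> (x - y) \<noteq> 0"
    using dual_functional_nonzero[of "x - y"] by auto
  moreover have "\<phi> (x - y) = 0"
    using assms[OF \<open>dual_functional \<phi>\<close>] dual_functional_diff[OF \<open>dual_functional \<phi>\<close>] by simp
  ultimately show False by simp
qed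

lemma dual_functional_compress:
  assumes "dual_functional \<phi>"
  shows "dual_functional (\<lambda>y. \<phi> (l * y * r))"
  unfolding dual_functional_def
proof (intro conjI allI)
  fix y z show "\<phi> (l * (y + z) * r) = \<phi> (l * y * r) + \<phi> (l * z * r)"
    using assms unfolding dual_functional_def by (simp add: distrib_left distrib_right)
next
  fix c y show "\<phi> (l * scaleC c y * r) = c * \<phi> (l * y * r)"
    using assms unfolding dual_functional_def by (simp flip: scaleC_mult_left scaleC_mult_right)
next
  obtain K where K: "\<And>y. cmod (\<phi> y) \<le> K * norm y"
    using assms unfolding dual_functional_def by blast
  have "cmod (\<phi> (l * y * r)) \<le> (max K 0 * norm l * norm r) * norm y" for y
  proof -
    have "cmod (\<phi> (l * y * r)) \<le> max K 0 * norm (l * y * r)"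
      using K[of "l * y * r"] by (meson max.cobounded1 mult_right_mono norm_ge_zero order_trans)
    also have "\<dots> \<le> max K 0 * (norm l * norm y * norm r)"
      by (intro mult_left_mono order_trans[OF norm_mult_ineq] mult_right_mono norm_mult_ineq) auto
    finally show ?thesis by (simp add: algebra_simps)
  qed
  then show "\<exists>K. \<forall>y. cmod (\<phi> (l * y * r)) \<le> K * norm y" by blast
qed

lemma derivation_compress_orthogonal:
  assumes "derivation D" and "p * b = 0" and "b * p = 0"
  shows "p * D b * p = 0"
proof -
  have "D 0 = 0" using assms(1) unfolding derivation_def by (metis add_cancel_right_right)
  then have "D p * b + p * D b = 0"
    using assms unfolding derivation_def by metis
  then have "p * D b * p = - (D p * b * p)"
    by (metis add_eq_0_iff mult_minus_left)
  then show ?thesis by (simp add: mult.assoc assms(3))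
qed

lemma weak_2_local_derivation_compress_add:
  fixes \<Delta> :: "'a::cstar_algebra \<Rightarrow> 'a"
  assumes \<Delta>: "weak_2_local_derivation \<Delta>" and "p * b = 0" and "b * p = 0"
  shows "p * \<Delta> (a + b) * p = p * \<Delta> a * p"
proof (rule dual_functional_eqI)
  fix \<phi> :: "'a \<Rightarrow> complex" assume "dual_functional \<phi>"
  then obtain D where "derivation D"
    and "\<phi> (p * \<Delta> (a + b) * p) = \<phi> (p * D (a + b) * p)"
    and "\<phi> (p * \<Delta> a * p) = \<phi> (p * D a * p)"
    using dual_functional_compress \<Delta> unfolding weak_2_local_derivation_def by blast
  moreover have "p * D (a + b) * p = p * D a * p"
    using derivation_compress_orthogonal[OF \<open>derivation D\<close> assms(2,3)] \<open>derivation D\<close>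
    unfolding derivation_def by (simp add: distrib_left distrib_right)
  ultimately show "\<phi> (p * \<Delta> (a + b) * p) = \<phi> (p * \<Delta> a * p)" by simp
qed

lemma idempotent_compress_complement:
  fixes p a :: "'a::ring"
  assumes "p * p = p"
  shows "p * (a - p * a - a * p + p * a * p) = 0" and "(a - p * a - a * p + p * a * p) * p = 0"
proof -
  have "p * (p * y) = p * y" for y using assms by (simp flip: mult.assoc)
  then show "p * (a - p * a - a * p + p * a * p) = 0"
    by (simp add: right_diff_distrib distrib_left mult.assoc)
  show "(a - p * a - a * p + p * a * p) * p = 0"
    using assms by (simp add: left_diff_distrib distrib_right mult.assoc)
qed

theorem lemma3p2:
  fixes \<Delta> :: "'a::cstar_algebra \<Rightarrow> 'a" and p b :: 'a
  assumes "weak_2_local_derivation \<Delta>"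
    and "projection p"
    and "p * b = 0" and "b * p = 0"
  shows "(\<forall>a. p * \<Delta> (a + b) * p = p * \<Delta> a * p) \<and>
         (\<forall>a. p * \<Delta> a * p = p * \<Delta> (a - (a - p * a - a * p + p * a * p)) * p)"
proof (intro conjI allI)
  fix a
  show "p * \<Delta> (a + b) * p = p * \<Delta> a * p"
    using weak_2_local_derivation_compress_add[OF assms(1,3,4)] .
next
  fix a
  let ?b = "a - p * a - a * p + p * a * p"
  have "p * p = p" using assms(2) unfolding projection_def by blast
  then have "p * \<Delta> ((a - ?b) + ?b) * p = p * \<Delta> (a - ?b) * p"
    by (intro weak_2_local_derivation_compress_add[OF assms(1)] idempotent_compress_complement)
  then show "p * \<Delta> a * p = p * \<Delta> (a - ?b) * p" by simp
qed

end
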